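(* The class $\mathbb{ML}^{\Box}$, regarded as a class of algebras $(L;\wedge,\vee,\neg,\Box)$, is an equational class (a variety). Concretely, an algebra $(L;\wedge,\vee,\neg,\Box)$ belongs to $\mathbb{ML}^{\Box}$ if and only if it satisfies the lattice identities, the identities $x\wedge\neg x\preccurlyeq y$, $y\preccurlyeq\neg(x\wedge\neg x)$, $x\wedge\neg(x\wedge y)\preccurlyeq\neg y$, and the identities $x\vee\neg\Box x\approx 1$, $\Box 1\approx 1$, and $\Box(x\vee\neg y)\wedge y\approx\Box x\wedge y$, where $1$ abbreviates $\neg(x\wedge\neg x)$ and $s\preccurlyeq t$ abbreviates $s\wedge t\approx s$.
   Context: A meet-complemented lattice is a lattice $(L,\le)$ (not necessarily distributive) such that for every $a\in L$ the element $\neg a=\max\{b\in L: a\wedge b\le c\ \text{for all } c\in L\}$ exists; such a lattice is bounded, with bottom $0$ and top $1=\neg(a\wedge\neg a)$. For $a\in L$, the necessity of $a$ is $\Box a=\max\{b\in L: a\vee\neg b=1\}$, when it exists. $\mathbb{ML}^{\Box}$ is the class of meet-complemented lattices in which $\Box a$ exists for every $a$, considered as algebras with operations $\wedge,\vee,\neg,\Box$. *)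

theory Defs
  imports Main
begin

text \<open>An algebra (L; meet, join, neg, box) is given by four operations on a type 'a
  (the carrier is the whole type).\<close>

definition lattice_ids :: "('a \<Rightarrow> 'a \<Rightarrow> 'a) \<Rightarrow> ('a \<Rightarrow> 'a \<Rightarrow> 'a) \<Rightarrow> bool" where
  "lattice_ids meet join \<longleftrightarrow>
     (\<forall>x y z. meet (meet x y) z = meet x (meet y z)) \<and>
     (\<forall>x y z. join (join x y) z = join x (join y z)) \<and>
     (\<forall>x y. meet x y = meet y x) \<and>
     (\<forall>x y. join x y = join y x) \<and>
     (\<forall>x. meet x x = x) \<and>
     (\<forall>x. join x x = x) \<and>
     (\<forall>x y. meet x (join x y) = x) \<and>
     (\<forall>x y. join x (meet x y) = x)"

definition mleq :: "('a \<Rightarrow> 'a \<Rightarrow> 'a) \<Rightarrow> 'a \<Rightarrow> 'a \<Rightarrow> bool" where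
  "mleq meet s t \<longleftrightarrow> meet s t = s"

definition is_max_in :: "('a \<Rightarrow> 'a \<Rightarrow> 'a) \<Rightarrow> 'a set \<Rightarrow> 'a \<Rightarrow> bool" where
  "is_max_in meet S m \<longleftrightarrow> m \<in> S \<and> (\<forall>b\<in>S. mleq meet b m)"

text \<open>Membership in ML-box: (L, meet, join) is a lattice; neg a is the maximum of
  {b. a \<and> b \<le> c for all c}; box a is the maximum of {b. a \<or> neg b = 1}, where
  "= 1" means being the top element, i.e. above every c.\<close>
definition mlbox :: "('a \<Rightarrow> 'a \<Rightarrow> 'a) \<Rightarrow> ('a \<Rightarrow> 'a \<Rightarrow> 'a) \<Rightarrow> ('a \<Rightarrow> 'a) \<Rightarrow> ('a \<Rightarrow> 'a) \<Rightarrow> bool" where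
  "mlbox meet join neg box \<longleftrightarrow>
     lattice_ids meet join \<and>
     (\<forall>a. is_max_in meet {b. \<forall>c. mleq meet (meet a b) c} (neg a)) \<and>
     (\<forall>a. is_max_in meet {b. \<forall>c. mleq meet c (join a (neg b))} (box a))"

definition mlbox_identities :: "('a \<Rightarrow> 'a \<Rightarrow> 'a) \<Rightarrow> ('a \<Rightarrow> 'a \<Rightarrow> 'a) \<Rightarrow> ('a \<Rightarrow> 'a) \<Rightarrow> ('a \<Rightarrow> 'a) \<Rightarrow> bool" where
  "mlbox_identities meet join neg box \<longleftrightarrow>
     lattice_ids meet join \<and>
     (\<forall>x y. mleq meet (meet x (neg x)) y) \<and>
     (\<forall>x y. mleq meet y (neg (meet x (neg x)))) \<and>
     (\<forall>x y. mleq meet (meet x (neg (meet x y))) (neg y)) \<and>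
     (\<forall>x. join x (neg (box x)) = neg (meet x (neg x))) \<and>
     (\<forall>x. box (neg (meet x (neg x))) = neg (meet x (neg x))) \<and>
     (\<forall>x y. meet (box (join x (neg y))) y = meet (box x) y)"

end

theory Submission
  imports Defs
begin

text \<open>The universally quantified maximality clauses become identities
  because the identities let one compute such a \<open>b\<close>: if \<open>a \<and> b = 0\<close> then
  \<open>b = b \<and> \<not>(b \<and> a) \<le> \<not>a\<close>, and if \<open>a \<or> \<not>b = 1\<close> then
  \<open>b = \<box>1 \<and> b = \<box>(a \<or> \<not>b) \<and> b = \<box>a \<and> b\<close>. Conversely, in \<open>\<M>\<L>\<^sup>\<box>\<close> the operation \<open>\<not>\<close> is
  antitone and \<open>\<box>\<close> is monotone, which yields the identities.\<close>

locale meet_join_lattice =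
  fixes meet join :: "'a \<Rightarrow> 'a \<Rightarrow> 'a"
  assumes lattice: "lattice_ids meet join"
begin

abbreviation le (infix "\<sqsubseteq>" 50) where "a \<sqsubseteq> b \<equiv> mleq meet a b"

lemma meet_assoc: "meet (meet x y) z = meet x (meet y z)"
  and join_assoc: "join (join x y) z = join x (join y z)"
  and meet_comm: "meet x y = meet y x"
  and join_comm: "join x y = join y x"
  and meet_idem: "meet x x = x"
  and meet_absorb: "meet x (join x y) = x"
  and join_absorb: "join x (meet x y) = x"
  using lattice unfolding lattice_ids_def by blast+

lemma le_refl: "a \<sqsubseteq> a"
  by (simp add: mleq_def meet_idem)

lemma le_antisym: "a \<sqsubseteq> b \<Longrightarrow> b \<sqsubseteq> a \<Longrightarrow> a = b"
  by (metis mleq_def meet_comm)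

lemma le_trans: "a \<sqsubseteq> b \<Longrightarrow> b \<sqsubseteq> c \<Longrightarrow> a \<sqsubseteq> c"
  by (metis mleq_def meet_assoc)

lemma meet_le1: "meet a b \<sqsubseteq> a"
  by (metis mleq_def meet_assoc meet_comm meet_idem)

lemma meet_le2: "meet a b \<sqsubseteq> b"
  by (metis mleq_def meet_assoc meet_idem)

lemma le_meetI: "c \<sqsubseteq> a \<Longrightarrow> c \<sqsubseteq> b \<Longrightarrow> c \<sqsubseteq> meet a b"
  by (metis mleq_def meet_assoc)

lemma le_iff_join_eq: "a \<sqsubseteq> c \<longleftrightarrow> join a c = c"
  by (metis mleq_def meet_absorb join_absorb meet_comm join_comm)

lemma join_ge1: "a \<sqsubseteq> join a b"
  by (simp add: mleq_def meet_absorb)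

lemma join_ge2: "b \<sqsubseteq> join a b"
  by (metis join_ge1 join_comm)

lemma join_leI: "a \<sqsubseteq> c \<Longrightarrow> b \<sqsubseteq> c \<Longrightarrow> join a b \<sqsubseteq> c"
  by (metis le_iff_join_eq join_assoc)

lemma join_mono: "a \<sqsubseteq> a' \<Longrightarrow> b \<sqsubseteq> b' \<Longrightarrow> join a b \<sqsubseteq> join a' b'"
  by (meson join_leI le_trans join_ge1 join_ge2)

lemma meet_mono: "a \<sqsubseteq> a' \<Longrightarrow> b \<sqsubseteq> b' \<Longrightarrow> meet a b \<sqsubseteq> meet a' b'"
  by (meson le_meetI le_trans meet_le1 meet_le2)

end

locale ml_box_algebra = meet_join_lattice +
  fixes neg box :: "'a \<Rightarrow> 'a"
  assumes meet_neg_bot: "meet a (neg a) \<sqsubseteq> c"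
    and le_negI: "(\<And>c. meet a b \<sqsubseteq> c) \<Longrightarrow> b \<sqsubseteq> neg a"
    and join_neg_box_top: "c \<sqsubseteq> join a (neg (box a))"
    and le_boxI: "(\<And>c. c \<sqsubseteq> join a (neg b)) \<Longrightarrow> b \<sqsubseteq> box a"
begin

lemma le_top: "y \<sqsubseteq> neg (meet x (neg x))"
  by (rule le_negI) (meson meet_neg_bot le_trans meet_le1)

lemma meet_neg_meet_le_neg: "meet x (neg (meet x y)) \<sqsubseteq> neg y"
proof (rule le_negI)
  fix c
  have "meet y (meet x (neg (meet x y))) = meet (meet x y) (neg (meet x y))"
    by (metis meet_assoc meet_comm)
  then show "meet y (meet x (neg (meet x y))) \<sqsubseteq> c"
    using meet_neg_bot by simp
qed

lemma join_neg_box: "join x (neg (box x)) = neg (meet x (neg x))"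
  by (simp add: join_neg_box_top le_antisym le_top)

lemma box_top: "box (neg (meet x (neg x))) = neg (meet x (neg x))"
proof -
  have "neg (meet x (neg x)) \<sqsubseteq> box (neg (meet x (neg x)))"
    by (rule le_boxI) (meson le_top le_trans join_ge1)
  then show ?thesis
    using le_top le_antisym by blast
qed

lemma neg_antimono: "a \<sqsubseteq> b \<Longrightarrow> neg b \<sqsubseteq> neg a"
  by (rule le_negI) (meson meet_neg_bot meet_mono le_refl le_trans)

lemma box_mono_join_neg: "box x \<sqsubseteq> box (join x (neg y))"
  by (rule le_boxI) (metis join_neg_box_top join_assoc join_comm join_mono le_refl le_trans join_ge2)

lemma box_join_neg_meet: "meet (box (join x (neg y))) y = meet (box x) y"
proof (rule le_antisym)
  let ?b = "meet (box (join x (neg y))) y"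
  have "?b \<sqsubseteq> box x"
  proof (rule le_boxI)
    fix c
    have "join (neg y) (neg (box (join x (neg y)))) \<sqsubseteq> neg ?b"
      by (meson join_leI neg_antimono meet_le1 meet_le2)
    then have "join (join x (neg y)) (neg (box (join x (neg y)))) \<sqsubseteq> join x (neg ?b)"
      by (metis join_assoc join_mono le_refl)
    then show "c \<sqsubseteq> join x (neg ?b)"
      using join_neg_box_top le_trans by blast
  qed
  then show "?b \<sqsubseteq> meet (box x) y"
    using le_meetI meet_le2 by blast
  show "meet (box x) y \<sqsubseteq> ?b"
    using box_mono_join_neg meet_mono le_refl by blast
qed

end

lemma ml_box_algebra_iff_mlbox:
  "ml_box_algebra meet join neg box \<longleftrightarrow> mlbox meet join neg box"
  unfolding ml_box_algebra_def ml_box_algebra_axioms_def meet_join_lattice_def mlbox_def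
    is_max_in_def
  by blast

lemma mlbox_imp_identities:
  assumes "mlbox meet join neg box"
  shows "mlbox_identities meet join neg box"
proof -
  interpret ml_box_algebra meet join neg box
    using assms ml_box_algebra_iff_mlbox by blast
  show ?thesis
    unfolding mlbox_identities_def
    using lattice meet_neg_bot le_top meet_neg_meet_le_neg join_neg_box box_top
      box_join_neg_meet
    by blast
qed

locale ml_box_identities = meet_join_lattice +
  fixes neg box :: "'a \<Rightarrow> 'a"
  assumes identities: "mlbox_identities meet join neg box"
begin

lemma meet_neg_bot: "meet x (neg x) \<sqsubseteq> y"
  and le_top: "y \<sqsubseteq> neg (meet x (neg x))"
  and meet_neg_meet_le_neg: "meet x (neg (meet x y)) \<sqsubseteq> neg y"
  and join_neg_box: "join x (neg (box x)) = neg (meet x (neg x))"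
  and box_top: "box (neg (meet x (neg x))) = neg (meet x (neg x))"
  and box_join_neg_meet: "meet (box (join x (neg y))) y = meet (box x) y"
  using identities unfolding mlbox_identities_def by blast+

lemma le_negI:
  assumes bot: "\<And>c. meet a b \<sqsubseteq> c"
  shows "b \<sqsubseteq> neg a"
proof -
  have "meet b a = meet a (neg a)"
    by (metis le_antisym meet_neg_bot meet_comm bot)
  then have "meet b (neg (meet b a)) = b"
    by (metis le_top mleq_def)
  then show ?thesis
    by (metis meet_neg_meet_le_neg)
qed

lemma le_boxI:
  assumes top: "\<And>c. c \<sqsubseteq> join a (neg b)"
  shows "b \<sqsubseteq> box a"
proof -
  have "join a (neg b) = neg (meet a (neg a))"
    using top le_top le_antisym by blast
  then have "meet (box (join a (neg b))) b = b"
    by (metis box_top le_top mleq_def meet_comm)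
  then show ?thesis
    by (metis box_join_neg_meet meet_comm mleq_def)
qed

end

lemma identities_imp_mlbox:
  assumes "mlbox_identities meet join neg box"
  shows "mlbox meet join neg box"
proof -
  interpret ml_box_identities meet join neg box
    using assms
    unfolding ml_box_identities_def ml_box_identities_axioms_def meet_join_lattice_def
      mlbox_identities_def
    by blast
  have "ml_box_algebra meet join neg box"
    by unfold_locales (use meet_neg_bot le_negI join_neg_box le_top le_boxI in auto)
  then show ?thesis
    using ml_box_algebra_iff_mlbox by blast
qed

theorem mainTheorem1:
  fixes meet join :: "'a \<Rightarrow> 'a \<Rightarrow> 'a" and neg box :: "'a \<Rightarrow> 'a"
  shows "mlbox meet join neg box \<longleftrightarrow> mlbox_identities meet join neg box"
  using mlbox_imp_identities identities_imp_mlbox by blast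

end
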